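(* Let $(X_t)_{t\in\mathbb{N}}$ be i.i.d. real random variables on a probability space $(\Omega,\mathcal{F},\mathbb{P})$ with $\mathbb{E}[|X_1|]<\infty$ and $\mathbb{E}[X_1]=0$, and let $r(K)=\mathbb{E}\big[|X_1|\mathbf{1}_{\{|X_1|>K\}}\big]$ for $K\ge0$. (i) For every $\varepsilon>0$ and every $\gamma\ge1$ with $r(\gamma^{1/3})\le\varepsilon$, $$\mathbb{P}\Big(\sup_{t\in\mathbb{N}}\frac{1}{\gamma+t}\Big|\sum_{s=1}^tX_s\Big|>2\varepsilon\Big)\le \frac{8}{\varepsilon^2}\gamma^{-1/3}+\Big(\frac{16}{\varepsilon^2}+2\Big)r(\gamma^{1/3}).$$ (ii) For every $\varepsilon>0$ and every $k\in\mathbb{N}$ with $r(k^{1/3})\le\varepsilon$, $$\mathbb{P}\Big(\frac1k\Big|\sum_{s=1}^kX_s\Big|>\varepsilon\Big)\le\frac{128}{\varepsilon^2}k^{-1/3}+\Big(\frac{256}{\varepsilon^2}+2\Big)r(k^{1/3}).$$ *)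

theory Defs
  imports "HOL-Probability.Probability"
begin

definition tail_moment :: "'a measure \<Rightarrow> ('a \<Rightarrow> real) \<Rightarrow> real \<Rightarrow> real" where
  "tail_moment M Y K = (\<integral>\<omega>. \<bar>Y \<omega>\<bar> * indicator {\<omega>. \<bar>Y \<omega>\<bar> > K} \<omega> \<partial>M)"

end

theory Submission
  imports Defs
begin

text \<open>
  Truncate \<open>X s\<close> at level \<open>\<gamma> + s\<close> and recentre it. The resulting variables are independent,
  bounded and centred, so the Hajek-Renyi inequality with weights \<open>1 / (\<gamma> + t)\<close> bounds the
  probability that some weighted truncated partial sum reaches \<open>\<epsilon>\<close> by
  \<open>\<epsilon>\<^sup>-\<^sup>2 \<Sum>t. (\<gamma> + t)\<^sup>-\<^sup>2 E[X 1\<^sup>2; \<bar>X 1\<bar> \<le> \<gamma> + t]\<close>, and splitting this sum at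
  \<open>K = \<gamma> powr (1/3)\<close> bounds it by \<open>K\<^sup>2 / \<gamma> + 2 r(K)\<close>. Truncation changes the partial sums only on the
  event that some \<open>\<bar>X s\<bar> > \<gamma> + s\<close>, which has probability at most \<open>r(K)\<close>, and since \<open>E[X 1] = 0\<close>
  the recentring moves the \<open>t\<close>-th partial sum by at most \<open>t r(K) \<le> t \<epsilon>\<close>. Part (ii) is part (i)
  with \<open>\<gamma> = k\<close> and \<open>\<epsilon> / 4\<close>.
\<close>

section \<open>The Hajek-Renyi inequality\<close>

lemma (in prob_space) integrable_abs_le:
  fixes f :: "'a \<Rightarrow> real"
  assumes "f \<in> borel_measurable M" "\<And>\<omega>. \<omega> \<in> space M \<Longrightarrow> \<bar>f \<omega>\<bar> \<le> C"
  shows "integrable M f"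
  using assms by (intro integrable_const_bound[where B=C]) auto

lemma integrable_mult_bounded:
  fixes f g :: "'a \<Rightarrow> real"
  assumes "integrable M f" "g \<in> borel_measurable M" "\<And>\<omega>. \<omega> \<in> space M \<Longrightarrow> \<bar>g \<omega>\<bar> \<le> C"
  shows "integrable M (\<lambda>\<omega>. g \<omega> * f \<omega>)"
proof (rule Bochner_Integration.integrable_bound[where f="\<lambda>\<omega>. C * f \<omega>"])
  have "\<bar>g \<omega> * f \<omega>\<bar> \<le> \<bar>C * f \<omega>\<bar>" if "\<omega> \<in> space M" for \<omega>
    using assms(3)[OF that] by (simp add: abs_mult mult_right_mono)
  then show "AE \<omega> in M. norm (g \<omega> * f \<omega>) \<le> norm (C * f \<omega>)"
    by (intro AE_I2) simp
qed (use assms in auto)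

lemma (in prob_space) indep_increment_orthogonal:
  fixes Y :: "nat \<Rightarrow> 'a \<Rightarrow> real" and g :: "(nat \<Rightarrow> real) \<Rightarrow> real"
  assumes indep: "indep_vars (\<lambda>_. borel) Y UNIV"
    and integrable: "\<And>s. s \<in> {Suc k..i} \<Longrightarrow> integrable M (Y s)"
    and centred: "\<And>s. s \<in> {Suc k..i} \<Longrightarrow> expectation (Y s) = 0"
    and g: "g \<in> borel_measurable (PiM {1..k} (\<lambda>_. borel))"
    and integrable_g: "integrable M (\<lambda>\<omega>. g (restrict (\<lambda>j. Y j \<omega>) {1..k}))"
  shows "expectation (\<lambda>\<omega>. g (restrict (\<lambda>j. Y j \<omega>) {1..k}) * (\<Sum>s=Suc k..i. Y s \<omega>)) = 0"
proof -
  have "indep_var borel (g \<circ> (\<lambda>\<omega>. restrict (\<lambda>j. Y j \<omega>) {1..k}))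
      borel ((\<lambda>f. \<Sum>s=Suc k..i. f s) \<circ> (\<lambda>\<omega>. restrict (\<lambda>j. Y j \<omega>) {Suc k..i}))"
    by (intro indep_var_compose[OF indep_var_restrict[OF indep]] g) auto
  moreover have "(\<lambda>f. \<Sum>s=Suc k..i. f s) \<circ> (\<lambda>\<omega>. restrict (\<lambda>j. Y j \<omega>) {Suc k..i})
      = (\<lambda>\<omega>. \<Sum>s=Suc k..i. Y s \<omega>)"
    by (auto intro!: sum.cong)
  ultimately have "indep_var borel (\<lambda>\<omega>. g (restrict (\<lambda>j. Y j \<omega>) {1..k}))
      borel (\<lambda>\<omega>. \<Sum>s=Suc k..i. Y s \<omega>)"
    by (simp add: comp_def)
  then have "expectation (\<lambda>\<omega>. g (restrict (\<lambda>j. Y j \<omega>) {1..k}) * (\<Sum>s=Suc k..i. Y s \<omega>))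
      = expectation (\<lambda>\<omega>. g (restrict (\<lambda>j. Y j \<omega>) {1..k})) * expectation (\<lambda>\<omega>. \<Sum>s=Suc k..i. Y s \<omega>)"
    by (rule indep_var_lebesgue_integral[OF _ integrable_g]) (use integrable in auto)
  also have "expectation (\<lambda>\<omega>. \<Sum>s=Suc k..i. Y s \<omega>) = 0"
    using integrable centred by (subst Bochner_Integration.integral_sum) auto
  finally show ?thesis by (simp only: mult_zero_right)
qed

lemma sum_first_passage:
  fixes n :: nat
  shows "(\<Sum>k=1..n. if Q k \<and> (\<forall>j\<in>{1..<k}. \<not> Q j) then 1 else 0) = (if \<exists>k\<in>{1..n}. Q k then 1 else (0::real))"
proof (induction n)
  case (Suc n)
  have "Suc n \<in> {1..Suc n}" by simp
  then show ?case
    using Suc by (cases "\<exists>k\<in>{1..n}. Q k") (auto simp: le_Suc_eq less_Suc_eq_le)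
qed simp

definition first_crossing :: "(nat \<Rightarrow> real) \<Rightarrow> real \<Rightarrow> nat \<Rightarrow> (nat \<Rightarrow> real) \<Rightarrow> real" where
  "first_crossing c \<epsilon> k f = (if \<epsilon> \<le> c k * \<bar>\<Sum>s=1..k. f s\<bar>
      \<and> (\<forall>j\<in>{1..<k}. c j * \<bar>\<Sum>s=1..j. f s\<bar> < \<epsilon>) then 1 else 0)"

lemma first_crossing_bounds: "0 \<le> first_crossing c \<epsilon> k f" "first_crossing c \<epsilon> k f \<le> 1"
  by (simp_all add: first_crossing_def)

lemma measurable_first_crossing:
  "first_crossing c \<epsilon> k \<in> borel_measurable (PiM {1..k} (\<lambda>_. borel))"
  unfolding first_crossing_def by measurable

lemma first_crossing_restrict: "first_crossing c \<epsilon> k (restrict f {1..k}) = first_crossing c \<epsilon> k f"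
proof -
  have "(\<Sum>s=1..j. restrict f {1..k} s) = (\<Sum>s=1..j. f s)" if "j \<le> k" for j
    using that by (intro sum.cong) auto
  then show ?thesis unfolding first_crossing_def by auto
qed

lemma sum_first_crossing:
  "(\<Sum>k=1..n. first_crossing c \<epsilon> k f) = (if \<exists>k\<in>{1..n}. \<epsilon> \<le> c k * \<bar>\<Sum>s=1..k. f s\<bar> then 1 else 0)"
  unfolding first_crossing_def not_le[symmetric] by (rule sum_first_passage)

lemma first_crossing_le:
  assumes "0 < \<epsilon>"
  shows "\<epsilon>\<^sup>2 * first_crossing c \<epsilon> k f \<le> (c k)\<^sup>2 * (first_crossing c \<epsilon> k f * (\<Sum>s=1..k. f s)\<^sup>2)"
proof (cases "first_crossing c \<epsilon> k f = 0")
  case False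
  then have "\<epsilon> \<le> c k * \<bar>\<Sum>s=1..k. f s\<bar>" and "first_crossing c \<epsilon> k f = 1"
    by (auto simp: first_crossing_def split: if_splits)
  moreover from this(1) have "\<epsilon>\<^sup>2 \<le> (c k * \<bar>\<Sum>s=1..k. f s\<bar>)\<^sup>2"
    using assms by (intro power_mono) auto
  ultimately show ?thesis by (simp add: power_mult_distrib)
qed simp

lemma sum_weight_differences_from:
  fixes a :: "nat \<Rightarrow> real"
  assumes "1 \<le> k"
  shows "(\<Sum>i=1..n. (a i - a (Suc i)) * (if k \<le> i then w else 0))
      = (if k \<le> n then (a k - a (Suc n)) * w else 0)"
  using assms
proof (induction n)
  case (Suc n)
  then show ?case
    by (cases "k \<le> n"; cases "k = Suc n") (auto simp: algebra_simps)
qed simp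

lemma Abel_summation_partial_sums:
  fixes a v :: "nat \<Rightarrow> real"
  shows "(\<Sum>i=1..n. (a i - a (Suc i)) * (\<Sum>j=1..i. v j)) + a (Suc n) * (\<Sum>j=1..n. v j)
      = (\<Sum>j=1..n. a j * v j)"
  by (induction n) (simp_all add: algebra_simps)

locale indep_centred_bounded = prob_space +
  fixes Y :: "nat \<Rightarrow> 'a \<Rightarrow> real" and n :: nat and B :: real
  assumes indep_Y: "indep_vars (\<lambda>_. borel) Y UNIV"
    and measurable_Y [measurable]: "\<And>s. Y s \<in> borel_measurable M"
    and B_nonneg: "0 \<le> B"
    and bounded_Y: "\<And>s \<omega>. s \<in> {1..n} \<Longrightarrow> \<omega> \<in> space M \<Longrightarrow> \<bar>Y s \<omega>\<bar> \<le> B"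
    and centred_Y: "\<And>s. s \<in> {1..n} \<Longrightarrow> expectation (Y s) = 0"
begin

definition partial_sum :: "nat \<Rightarrow> 'a \<Rightarrow> real" where
  "partial_sum t \<omega> = (\<Sum>s=1..t. Y s \<omega>)"

lemma measurable_partial_sum [measurable]: "partial_sum t \<in> borel_measurable M"
  unfolding partial_sum_def by measurable

lemma integrable_Y: "s \<in> {1..n} \<Longrightarrow> integrable M (Y s)"
  using bounded_Y by (intro integrable_abs_le) auto

lemma abs_sum_Y_le:
  assumes "A \<subseteq> {1..n}" "\<omega> \<in> space M"
  shows "\<bar>\<Sum>s\<in>A. Y s \<omega>\<bar> \<le> real n * B"
proof -
  have "\<bar>\<Sum>s\<in>A. Y s \<omega>\<bar> \<le> (\<Sum>s\<in>A. B)"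
    using assms bounded_Y by (intro order.trans[OF sum_abs] sum_mono) auto
  also have "\<dots> \<le> real n * B"
    using card_mono[OF _ assms(1)] B_nonneg by (simp add: mult_right_mono)
  finally show ?thesis .
qed

lemma abs_partial_sum_le: "t \<le> n \<Longrightarrow> \<omega> \<in> space M \<Longrightarrow> \<bar>partial_sum t \<omega>\<bar> \<le> real n * B"
  unfolding partial_sum_def by (intro abs_sum_Y_le) auto

lemma integrable_partial_sum_square: "t \<le> n \<Longrightarrow> integrable M (\<lambda>\<omega>. (partial_sum t \<omega>)\<^sup>2)"
  by (rule integrable_abs_le[where C="(real n * B)\<^sup>2"])
    (auto intro!: power_mono[where n=2, OF abs_partial_sum_le, simplified])

lemma partial_sum_split:
  "k \<le> i \<Longrightarrow> partial_sum i \<omega> = partial_sum k \<omega> + (\<Sum>s=Suc k..i. Y s \<omega>)"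
  unfolding partial_sum_def using sum.ub_add_nat[of 1 k "\<lambda>s. Y s \<omega>" "i - k"] by simp

text \<open>Weighting by \<open>h (Y 1, \<dots>, Y k)\<close> stands in for conditioning on the first \<open>k\<close> variables.\<close>
lemma partial_sum_square_submartingale:
  assumes ki: "k \<le> i" "i \<le> n"
    and h: "h \<in> borel_measurable (PiM {1..k} (\<lambda>_. borel))" "\<And>f. 0 \<le> h f" "\<And>f. h f \<le> 1"
  shows "expectation (\<lambda>\<omega>. h (restrict (\<lambda>j. Y j \<omega>) {1..k}) * (partial_sum k \<omega>)\<^sup>2)
      \<le> expectation (\<lambda>\<omega>. h (restrict (\<lambda>j. Y j \<omega>) {1..k}) * (partial_sum i \<omega>)\<^sup>2)"
proof -
  define H where "H \<omega> = h (restrict (\<lambda>j. Y j \<omega>) {1..k})" for \<omega>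
  define R where "R \<omega> = (\<Sum>s=Suc k..i. Y s \<omega>)" for \<omega>
  have [measurable]: "H \<in> borel_measurable M"
    unfolding H_def by (rule measurable_compose[OF _ h(1)]) (auto intro!: measurable_restrict)
  have [measurable]: "R \<in> borel_measurable M" unfolding R_def by measurable
  have H: "\<bar>H \<omega>\<bar> \<le> 1" for \<omega> unfolding H_def using h by auto
  have integrable_HS: "integrable M (\<lambda>\<omega>. H \<omega> * partial_sum k \<omega>)"
    using ki by (intro integrable_mult_bounded[OF integrable_abs_le _ H]) (auto intro: abs_partial_sum_le)
  have integrable_HS2: "integrable M (\<lambda>\<omega>. H \<omega> * (partial_sum t \<omega>)\<^sup>2)" if "t \<le> n" for t
    using that by (intro integrable_mult_bounded[OF integrable_partial_sum_square _ H]) auto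
  have integrable_HSR: "integrable M (\<lambda>\<omega>. R \<omega> * (H \<omega> * partial_sum k \<omega>))"
    unfolding R_def using ki
    by (intro integrable_mult_bounded[OF integrable_HS _ abs_sum_Y_le]) auto
  have g_eq: "h (restrict (\<lambda>j. Y j \<omega>) {1..k}) * (\<Sum>s=1..k. restrict (\<lambda>j. Y j \<omega>) {1..k} s)
      = H \<omega> * partial_sum k \<omega>" for \<omega>
    unfolding H_def partial_sum_def by (auto intro!: sum.cong)
  have "s \<in> {Suc k..i} \<Longrightarrow> s \<in> {1..n}" for s using ki by auto
  then have "expectation (\<lambda>\<omega>. H \<omega> * partial_sum k \<omega> * R \<omega>) = 0"
    using indep_increment_orthogonal[OF indep_Y integrable_Y centred_Y,
        where g="\<lambda>f. h f * (\<Sum>s=1..k. f s)" and k=k and i=i]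
      h(1) integrable_HS unfolding g_eq R_def by auto
  then have orthogonal: "expectation (\<lambda>\<omega>. R \<omega> * (H \<omega> * partial_sum k \<omega>)) = 0"
    by (simp add: mult_ac)
  have "expectation (\<lambda>\<omega>. H \<omega> * (partial_sum k \<omega>)\<^sup>2)
      = expectation (\<lambda>\<omega>. H \<omega> * (partial_sum k \<omega>)\<^sup>2 + 2 * (R \<omega> * (H \<omega> * partial_sum k \<omega>)))"
    using integrable_HS2 integrable_HSR orthogonal ki by simp
  also have "\<dots> \<le> expectation (\<lambda>\<omega>. H \<omega> * (partial_sum i \<omega>)\<^sup>2)"
  proof (rule integral_mono)
    fix \<omega>
    have "0 \<le> H \<omega> * (R \<omega>)\<^sup>2" using h unfolding H_def by simp
    then show "H \<omega> * (partial_sum k \<omega>)\<^sup>2 + 2 * (R \<omega> * (H \<omega> * partial_sum k \<omega>))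
        \<le> H \<omega> * (partial_sum i \<omega>)\<^sup>2"
      unfolding partial_sum_split[OF ki(1), of \<omega>] R_def[symmetric]
      by (simp add: power2_eq_square algebra_simps)
  qed (use integrable_HS2 integrable_HSR ki in auto)
  finally show ?thesis unfolding H_def .
qed

lemma expectation_partial_sum_square:
  "t \<le> n \<Longrightarrow> expectation (\<lambda>\<omega>. (partial_sum t \<omega>)\<^sup>2) = (\<Sum>s=1..t. expectation (\<lambda>\<omega>. (Y s \<omega>)\<^sup>2))"
proof (induction t)
  case (Suc t)
  have Y: "integrable M (Y (Suc t))" "expectation (Y (Suc t)) = 0"
    using Suc.prems by (auto intro: integrable_Y centred_Y)
  have integrable_S: "integrable M (partial_sum t)"
    using Suc.prems by (intro integrable_abs_le[OF _ abs_partial_sum_le]) auto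
  have "(\<Sum>s=1..t. restrict (\<lambda>j. Y j \<omega>) {1..t} s) = partial_sum t \<omega>" for \<omega>
    unfolding partial_sum_def by (auto intro!: sum.cong)
  then have orthogonal: "expectation (\<lambda>\<omega>. partial_sum t \<omega> * Y (Suc t) \<omega>) = 0"
    using indep_increment_orthogonal[OF indep_Y, where g="\<lambda>f. \<Sum>s=1..t. f s" and k=t and i="Suc t"]
      Y integrable_S by simp
  have integrable_SY: "integrable M (\<lambda>\<omega>. partial_sum t \<omega> * Y (Suc t) \<omega>)"
    using Suc.prems integrable_S
    by (subst mult.commute, intro integrable_mult_bounded[OF _ _ bounded_Y]) auto
  have integrable_Y2: "integrable M (\<lambda>\<omega>. (Y (Suc t) \<omega>)\<^sup>2)"
    using Suc.prems unfolding power2_eq_square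
    by (intro integrable_mult_bounded[OF integrable_Y _ bounded_Y]) auto
  have "(partial_sum (Suc t) \<omega>)\<^sup>2
      = (partial_sum t \<omega>)\<^sup>2 + 2 * (partial_sum t \<omega> * Y (Suc t) \<omega>) + (Y (Suc t) \<omega>)\<^sup>2" for \<omega>
    by (simp add: partial_sum_def power2_eq_square algebra_simps)
  then show ?case
    using Suc integrable_partial_sum_square[of t] integrable_SY integrable_Y2 orthogonal by simp
qed (simp add: partial_sum_def)

text \<open>
  By Abel summation its mean is \<open>\<Sum>t. a t * E[Y t\<^sup>2]\<close>, while for decreasing weights it dominates
  \<open>a k * (partial_sum k)\<^sup>2\<close> in mean on every event determined by \<open>Y 1, \<dots>, Y k\<close>.
\<close>
definition weighted_square_sum :: "(nat \<Rightarrow> real) \<Rightarrow> 'a \<Rightarrow> real" where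
  "weighted_square_sum a \<omega>
    = (\<Sum>i=1..n. (a i - a (Suc i)) * (partial_sum i \<omega>)\<^sup>2) + a (Suc n) * (partial_sum n \<omega>)\<^sup>2"

lemma measurable_weighted_square_sum [measurable]: "weighted_square_sum a \<in> borel_measurable M"
  unfolding weighted_square_sum_def by measurable

lemma integrable_weighted_square_sum: "integrable M (weighted_square_sum a)"
  unfolding weighted_square_sum_def
  by (intro Bochner_Integration.integrable_add Bochner_Integration.integrable_sum integrable_mult_right
      integrable_partial_sum_square) auto

lemma expectation_weighted_square_sum:
  "expectation (weighted_square_sum a) = (\<Sum>t=1..n. a t * expectation (\<lambda>\<omega>. (Y t \<omega>)\<^sup>2))"
proof -
  have "expectation (weighted_square_sum a)
      = (\<Sum>i=1..n. (a i - a (Suc i)) * expectation (\<lambda>\<omega>. (partial_sum i \<omega>)\<^sup>2))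
        + a (Suc n) * expectation (\<lambda>\<omega>. (partial_sum n \<omega>)\<^sup>2)"
    unfolding weighted_square_sum_def using integrable_partial_sum_square
    by (subst Bochner_Integration.integral_add) (auto simp: Bochner_Integration.integral_sum)
  also have "\<dots> = (\<Sum>i=1..n. (a i - a (Suc i)) * (\<Sum>s=1..i. expectation (\<lambda>\<omega>. (Y s \<omega>)\<^sup>2)))
        + a (Suc n) * (\<Sum>s=1..n. expectation (\<lambda>\<omega>. (Y s \<omega>)\<^sup>2))"
    by (simp add: expectation_partial_sum_square)
  also have "\<dots> = (\<Sum>t=1..n. a t * expectation (\<lambda>\<omega>. (Y t \<omega>)\<^sup>2))"
    by (rule Abel_summation_partial_sums)
  finally show ?thesis .
qed

lemma weighted_square_sum_nonneg:
  assumes "\<And>t. 0 \<le> a t" "\<And>t. a (Suc t) \<le> a t"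
  shows "0 \<le> weighted_square_sum a \<omega>"
  unfolding weighted_square_sum_def using assms
  by (intro add_nonneg_nonneg sum_nonneg mult_nonneg_nonneg) auto

lemma expectation_weighted_square_sum_ge:
  assumes a: "\<And>t. 0 \<le> a t" "\<And>t. a (Suc t) \<le> a t" and k: "k \<in> {1..n}"
    and h: "h \<in> borel_measurable (PiM {1..k} (\<lambda>_. borel))" "\<And>f. 0 \<le> h f" "\<And>f. h f \<le> 1"
  shows "a k * expectation (\<lambda>\<omega>. h (restrict (\<lambda>j. Y j \<omega>) {1..k}) * (partial_sum k \<omega>)\<^sup>2)
      \<le> expectation (\<lambda>\<omega>. h (restrict (\<lambda>j. Y j \<omega>) {1..k}) * weighted_square_sum a \<omega>)"
proof -
  define H where "H \<omega> = h (restrict (\<lambda>j. Y j \<omega>) {1..k})" for \<omega>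
  define E where "E i = expectation (\<lambda>\<omega>. H \<omega> * (partial_sum i \<omega>)\<^sup>2)" for i
  have [measurable]: "H \<in> borel_measurable M"
    unfolding H_def by (rule measurable_compose[OF _ h(1)]) (auto intro!: measurable_restrict)
  have H: "\<bar>H \<omega>\<bar> \<le> 1" for \<omega> unfolding H_def using h by auto
  have integrable_HS2: "integrable M (\<lambda>\<omega>. H \<omega> * (partial_sum i \<omega>)\<^sup>2)" if "i \<le> n" for i
    using that by (intro integrable_mult_bounded[OF integrable_partial_sum_square _ H]) auto
  have "expectation (\<lambda>\<omega>. H \<omega> * weighted_square_sum a \<omega>)
      = (\<Sum>i=1..n. (a i - a (Suc i)) * E i) + a (Suc n) * E n"
  proof -
    have "expectation (\<lambda>\<omega>. H \<omega> * weighted_square_sum a \<omega>)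
        = expectation (\<lambda>\<omega>. (\<Sum>i=1..n. (a i - a (Suc i)) * (H \<omega> * (partial_sum i \<omega>)\<^sup>2))
                + a (Suc n) * (H \<omega> * (partial_sum n \<omega>)\<^sup>2))"
      by (simp add: weighted_square_sum_def distrib_left sum_distrib_left mult_ac)
    also have "\<dots> = (\<Sum>i=1..n. (a i - a (Suc i)) * E i) + a (Suc n) * E n"
      unfolding E_def using integrable_HS2
      by (subst Bochner_Integration.integral_add)
        (auto intro!: Bochner_Integration.integrable_sum simp: Bochner_Integration.integral_sum)
    finally show ?thesis .
  qed
  also have "\<dots> \<ge> (\<Sum>i=1..n. (a i - a (Suc i)) * (if k \<le> i then E k else 0)) + a (Suc n) * E k"
  proof (intro add_mono sum_mono mult_left_mono)
    fix i assume i: "i \<in> {1..n}"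
    show "(if k \<le> i then E k else 0) \<le> E i"
    proof (cases "k \<le> i")
      case True
      then show ?thesis
        using partial_sum_square_submartingale[OF True _ h] i unfolding E_def H_def by simp
    next
      case False
      have "0 \<le> H \<omega>" for \<omega> using h unfolding H_def by simp
      with False show ?thesis unfolding E_def by (simp add: integral_nonneg_AE)
    qed
  qed (use a k partial_sum_square_submartingale[OF _ _ h] in \<open>auto simp: E_def H_def\<close>)
  also have "(\<Sum>i=1..n. (a i - a (Suc i)) * (if k \<le> i then E k else 0)) + a (Suc n) * E k = a k * E k"
    using k sum_weight_differences_from[where k=k and n=n and a=a and w="E k"] by (simp add: algebra_simps)
  finally show ?thesis unfolding E_def H_def .
qed

lemma expectation_first_crossing_le:
  assumes c: "\<And>t. 0 \<le> c t" "\<And>t. c (Suc t) \<le> c t" and \<epsilon>: "0 < \<epsilon>" and k: "k \<in> {1..n}"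
  shows "\<epsilon>\<^sup>2 * expectation (\<lambda>\<omega>. first_crossing c \<epsilon> k (\<lambda>j. Y j \<omega>))
      \<le> expectation (\<lambda>\<omega>. first_crossing c \<epsilon> k (\<lambda>j. Y j \<omega>) * weighted_square_sum (\<lambda>t. (c t)\<^sup>2) \<omega>)"
proof -
  define F where "F \<omega> = first_crossing c \<epsilon> k (\<lambda>j. Y j \<omega>)" for \<omega>
  have [measurable]: "F \<in> borel_measurable M" unfolding F_def first_crossing_def by measurable
  have abs_F: "\<bar>F \<omega>\<bar> \<le> 1" for \<omega>
    using first_crossing_bounds[of c \<epsilon> k "\<lambda>j. Y j \<omega>"] unfolding F_def by simp
  have "\<epsilon>\<^sup>2 * F \<omega> \<le> (c k)\<^sup>2 * (F \<omega> * (partial_sum k \<omega>)\<^sup>2)" for \<omega>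
    using first_crossing_le[OF \<epsilon>] unfolding F_def partial_sum_def .
  then have "\<epsilon>\<^sup>2 * expectation F \<le> expectation (\<lambda>\<omega>. (c k)\<^sup>2 * (F \<omega> * (partial_sum k \<omega>)\<^sup>2))"
    using k by (subst integral_mult_right_zero[symmetric], intro integral_mono integrable_mult_right
        integrable_mult_bounded[OF integrable_partial_sum_square _ abs_F] integrable_abs_le[OF _ abs_F]) auto
  also have "\<dots> \<le> expectation (\<lambda>\<omega>. F \<omega> * weighted_square_sum (\<lambda>t. (c t)\<^sup>2) \<omega>)"
    using expectation_weighted_square_sum_ge[OF _ _ k measurable_first_crossing first_crossing_bounds,
        of "\<lambda>t. (c t)\<^sup>2" c \<epsilon>, unfolded first_crossing_restrict] c
    by (simp add: F_def power_mono)
  finally show ?thesis unfolding F_def .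
qed

theorem Hajek_Renyi_inequality:
  assumes c: "\<And>t. 0 \<le> c t" "\<And>t. c (Suc t) \<le> c t" and \<epsilon>: "0 < \<epsilon>"
  shows "\<epsilon>\<^sup>2 * prob {\<omega>\<in>space M. \<exists>t\<in>{1..n}. \<epsilon> \<le> c t * \<bar>partial_sum t \<omega>\<bar>}
      \<le> (\<Sum>t=1..n. (c t)\<^sup>2 * expectation (\<lambda>\<omega>. (Y t \<omega>)\<^sup>2))"
proof -
  define D where "D = {\<omega>\<in>space M. \<exists>t\<in>{1..n}. \<epsilon> \<le> c t * \<bar>partial_sum t \<omega>\<bar>}"
  define F where "F k \<omega> = first_crossing c \<epsilon> k (\<lambda>j. Y j \<omega>)" for k \<omega>
  define Z where "Z = weighted_square_sum (\<lambda>t. (c t)\<^sup>2)"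
  have [measurable]: "D \<in> sets M" "F k \<in> borel_measurable M" for k
    unfolding D_def F_def first_crossing_def by measurable
  have abs_F: "\<bar>F k \<omega>\<bar> \<le> 1" for k \<omega>
    using first_crossing_bounds[of c \<epsilon> k "\<lambda>j. Y j \<omega>"] unfolding F_def by simp
  have integrable_F: "integrable M (F k)" for k
    by (rule integrable_abs_le[OF _ abs_F]) measurable
  have Z_nonneg: "0 \<le> Z \<omega>" for \<omega>
    unfolding Z_def using c by (intro weighted_square_sum_nonneg) (auto intro: power_mono)
  have partition: "(\<Sum>k=1..n. F k \<omega>) = indicator D \<omega>" if "\<omega> \<in> space M" for \<omega>
    using that unfolding F_def sum_first_crossing by (simp add: D_def partial_sum_def)
  have "\<epsilon>\<^sup>2 * prob D = \<epsilon>\<^sup>2 * expectation (\<lambda>\<omega>. \<Sum>k=1..n. F k \<omega>)"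
    using partition by (simp add: Bochner_Integration.integral_cong Int_absorb2 D_def)
  also have "\<dots> = (\<Sum>k=1..n. \<epsilon>\<^sup>2 * expectation (F k))"
    by (simp add: Bochner_Integration.integral_sum integrable_F sum_distrib_left)
  also have "\<dots> \<le> (\<Sum>k=1..n. expectation (\<lambda>\<omega>. F k \<omega> * Z \<omega>))"
    unfolding F_def Z_def using c \<epsilon> by (intro sum_mono expectation_first_crossing_le)
  also have "\<dots> = expectation (\<lambda>\<omega>. (\<Sum>k=1..n. F k \<omega>) * Z \<omega>)"
    unfolding sum_distrib_right Z_def
    by (rule Bochner_Integration.integral_sum[symmetric])
      (auto intro: integrable_mult_bounded[OF integrable_weighted_square_sum _ abs_F])
  also have "\<dots> = expectation (\<lambda>\<omega>. Z \<omega> * indicator D \<omega>)"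
    using partition by (intro Bochner_Integration.integral_cong) auto
  also have "\<dots> \<le> expectation Z"
    unfolding Z_def using Z_nonneg[unfolded Z_def]
    by (intro integral_mono integrable_weighted_square_sum integrable_real_mult_indicator)
      (auto simp: indicator_def)
  also have "\<dots> = (\<Sum>t=1..n. (c t)\<^sup>2 * expectation (\<lambda>\<omega>. (Y t \<omega>)\<^sup>2))"
    by (simp add: Z_def expectation_weighted_square_sum)
  finally show ?thesis unfolding D_def .
qed

end

definition truncate :: "real \<Rightarrow> real \<Rightarrow> real" where
  "truncate b x = (if \<bar>x\<bar> \<le> b then x else 0)"

definition tail_abs :: "real \<Rightarrow> real \<Rightarrow> real" where
  "tail_abs K x = (if K < \<bar>x\<bar> then \<bar>x\<bar> else 0)"

lemma measurable_truncate [measurable]: "truncate b \<in> borel_measurable borel"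
  unfolding truncate_def by measurable

lemma measurable_tail_abs [measurable]: "tail_abs K \<in> borel_measurable borel"
  unfolding tail_abs_def by measurable

lemma tail_moment_eq: "tail_moment M Y K = (\<integral>\<omega>. tail_abs K (Y \<omega>) \<partial>M)"
  unfolding tail_moment_def tail_abs_def by (intro Bochner_Integration.integral_cong) auto

lemma tail_moment_nonneg: "0 \<le> tail_moment M Y K"
  unfolding tail_moment_def by (intro Bochner_Integration.integral_nonneg) (auto simp: indicator_def)

lemma inverse_square_le_telescoping:
  fixes y :: real assumes "1 < y"
  shows "(1 / y)\<^sup>2 \<le> 1 / (y - 1) - 1 / y"
proof -
  have "(1 / y)\<^sup>2 = 1 / (y * y)" by (simp add: power2_eq_square)
  also have "\<dots> \<le> 1 / (y * (y - 1))"
    using assms by (intro divide_left_mono mult_left_mono) auto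
  also have "\<dots> = 1 / (y - 1) - 1 / y"
    using assms by (simp add: field_simps)
  finally show ?thesis .
qed

lemma sum_inverse_square_le_telescoping:
  fixes g :: real assumes "0 < g"
  shows "(\<Sum>t=1..n. (1 / (g + real t))\<^sup>2) \<le> 1 / g - 1 / (g + real n)"
proof (induction n)
  case (Suc n)
  have "(1 / (g + real (Suc n)))\<^sup>2 \<le> 1 / (g + real n) - 1 / (g + real (Suc n))"
    using inverse_square_le_telescoping[of "g + real (Suc n)"] assms by simp
  with Suc show ?case by simp
qed simp

lemma sum_inverse_square_le:
  fixes g :: real assumes "0 < g"
  shows "(\<Sum>t=1..n. (1 / (g + real t))\<^sup>2) \<le> 1 / g"
  using sum_inverse_square_le_telescoping[OF assms, of n] assms
  by (smt (verit) divide_nonneg_nonneg of_nat_0_le_iff)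

lemma sum_inverse_square_from_le_telescoping:
  fixes g a :: real assumes g: "0 < g" and a: "0 < a"
  shows "(\<Sum>t=1..n. if a \<le> g + real t then (1 / (g + real t))\<^sup>2 else 0)
      \<le> (if a \<le> g + real n then 2 / a - 1 / (g + real n) else 0)"
proof (induction n)
  case 0
  have "1 / g \<le> 2 / a" if "a \<le> g" using that a g by (simp add: field_simps)
  then show ?case by simp
next
  case (Suc n)
  define y where "y = g + real (Suc n)"
  have y: "1 < y" "g + real n = y - 1" using g by (auto simp: y_def)
  have last: "(1 / y)\<^sup>2 \<le> 2 / a - 1 / y" if "a \<le> y"
  proof -
    have "(1 / y)\<^sup>2 \<le> 1 / y" using y(1) by (simp add: field_simps power2_eq_square)
    moreover have "2 / y \<le> 2 / a" using that a by (simp add: field_simps)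
    ultimately show ?thesis by simp
  qed
  have "(\<Sum>t=1..Suc n. if a \<le> g + real t then (1 / (g + real t))\<^sup>2 else 0)
      = (\<Sum>t=1..n. if a \<le> g + real t then (1 / (g + real t))\<^sup>2 else 0) + (if a \<le> y then (1 / y)\<^sup>2 else 0)"
    by (simp add: y_def)
  also have "\<dots> \<le> (if a \<le> y then 2 / a - 1 / y else 0)"
    using Suc.IH inverse_square_le_telescoping[OF y(1)] last unfolding y(2)
    by (cases "a \<le> y - 1"; cases "a \<le> y") auto
  finally show ?case unfolding y_def .
qed

lemma sum_inverse_square_from_le:
  fixes g a :: real assumes "0 < g" "0 < a"
  shows "(\<Sum>t=1..n. if a \<le> g + real t then (1 / (g + real t))\<^sup>2 else 0) \<le> 2 / a"
  using sum_inverse_square_from_le_telescoping[OF assms, of n] assms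
  by (smt (verit) divide_nonneg_nonneg of_nat_0_le_iff)

lemma abs_truncate_le: "\<bar>truncate b x\<bar> \<le> \<bar>x\<bar>"
  by (simp add: truncate_def)

lemma abs_truncate_le_level: "0 \<le> b \<Longrightarrow> \<bar>truncate b x\<bar> \<le> b"
  by (simp add: truncate_def)

lemma sum_truncated_square_le:
  fixes g K x :: real assumes g: "0 < g" and K: "0 \<le> K"
  shows "(\<Sum>t=1..n. (1 / (g + real t))\<^sup>2 * (truncate (g + real t) x)\<^sup>2)
      \<le> K\<^sup>2 / g + 2 * tail_abs K x"
proof (cases "\<bar>x\<bar> \<le> K")
  case True
  have "(truncate b x)\<^sup>2 \<le> K\<^sup>2" for b
    using order.trans[OF abs_truncate_le True] K by (simp add: abs_le_square_iff[symmetric])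
  then have "(\<Sum>t=1..n. (1 / (g + real t))\<^sup>2 * (truncate (g + real t) x)\<^sup>2)
      \<le> (\<Sum>t=1..n. (1 / (g + real t))\<^sup>2 * K\<^sup>2)"
    by (intro sum_mono mult_left_mono) simp_all
  also have "\<dots> = K\<^sup>2 * (\<Sum>t=1..n. (1 / (g + real t))\<^sup>2)"
    by (simp add: sum_distrib_left mult.commute)
  also have "\<dots> \<le> K\<^sup>2 * (1 / g)"
    by (intro mult_left_mono sum_inverse_square_le g) simp
  finally show ?thesis using True by (simp add: tail_abs_def)
next
  case False
  then have x: "0 < \<bar>x\<bar>" using K by simp
  have "(\<Sum>t=1..n. (1 / (g + real t))\<^sup>2 * (truncate (g + real t) x)\<^sup>2)
      = x\<^sup>2 * (\<Sum>t=1..n. if \<bar>x\<bar> \<le> g + real t then (1 / (g + real t))\<^sup>2 else 0)"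
    unfolding sum_distrib_left by (intro sum.cong) (auto simp: truncate_def)
  also have "\<dots> \<le> x\<^sup>2 * (2 / \<bar>x\<bar>)"
    by (intro mult_left_mono sum_inverse_square_from_le g x) simp
  also have "\<dots> = 2 * \<bar>x\<bar>"
    using x by (simp add: power2_eq_square field_simps abs_mult_self_eq)
  finally show ?thesis using False g by (simp add: tail_abs_def add_increasing)
qed

lemma count_exceed_le_tail_abs:
  fixes g K x :: real assumes "0 \<le> g" "K \<le> g"
  shows "(\<Sum>s=1..n. if g + real s < \<bar>x\<bar> then 1 else (0::real)) \<le> tail_abs K x"
proof -
  have "(\<Sum>s=1..n. if g + real s < \<bar>x\<bar> then 1 else (0::real)) \<le> max 0 (\<bar>x\<bar> - g)"
  proof (induction n)
    case (Suc n)
    then show ?case by (cases "g + real (Suc n) < \<bar>x\<bar>") auto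
  qed simp
  then show ?thesis
    using assms by (auto simp: tail_abs_def)
qed

lemma maximal_bound_le:
  fixes p r \<epsilon> :: real assumes "0 \<le> p" "0 \<le> r"
  shows "(p + 2 * r) / \<epsilon>\<^sup>2 + r \<le> 8 / \<epsilon>\<^sup>2 * p + (16 / \<epsilon>\<^sup>2 + 2) * r"
proof -
  have "0 \<le> p / \<epsilon>\<^sup>2" "0 \<le> r / \<epsilon>\<^sup>2" using assms by simp_all
  then have "p / \<epsilon>\<^sup>2 + 2 * (r / \<epsilon>\<^sup>2) + r \<le> 8 * (p / \<epsilon>\<^sup>2) + 16 * (r / \<epsilon>\<^sup>2) + 2 * r"
    using assms by linarith
  then show ?thesis by (simp add: add_divide_distrib algebra_simps)
qed

lemma powr_one_third:
  fixes g :: real assumes "1 \<le> g"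
  shows "1 \<le> g powr (1/3)" "g powr (1/3) \<le> g" "(g powr (1/3))\<^sup>2 / g = g powr (-1/3)"
proof -
  show "1 \<le> g powr (1/3)" using assms by (simp add: ge_one_powr_ge_zero)
  show "g powr (1/3) \<le> g" using assms powr_mono[of "1/3" 1 g] by simp
  have "(g powr (1/3))\<^sup>2 = g powr (2/3)"
    using assms by (simp add: powr_powr[symmetric] powr_realpow[symmetric] power2_eq_square powr_add[symmetric])
  moreover have "g powr (-1/3) = g powr (2/3) * g powr (-1)"
    using powr_add[of g "2/3" "-1"] by simp
  moreover have "g powr (-1) = 1 / g"
    using assms by (simp add: powr_minus_divide)
  ultimately show "(g powr (1/3))\<^sup>2 / g = g powr (-1/3)"
    by simp
qed

section \<open>Truncation of a centred i.i.d. sequence\<close>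

locale centred_iid = prob_space +
  fixes X :: "nat \<Rightarrow> 'a \<Rightarrow> real"
  assumes measurable_X [measurable]: "\<And>t. X t \<in> borel_measurable M"
    and indep_X: "indep_vars (\<lambda>_. borel) X UNIV"
    and identically_distributed: "\<And>t. distr M borel (X t) = distr M borel (X 1)"
    and integrable_X: "integrable M (X 1)"
    and centred_X: "expectation (X 1) = 0"
begin

lemma expectation_comp_X:
  fixes f :: "real \<Rightarrow> real"
  assumes [measurable]: "f \<in> borel_measurable borel"
  shows "expectation (\<lambda>\<omega>. f (X s \<omega>)) = expectation (\<lambda>\<omega>. f (X 1 \<omega>))"
  using integral_distr[of "X s" M borel f] integral_distr[of "X 1" M borel f]
  by (simp add: identically_distributed[of s])

lemma integrable_truncate_X: "integrable M (\<lambda>\<omega>. truncate b (X s \<omega>))"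
  by (rule integrable_abs_le[where C="max b 0"]) (auto simp: truncate_def)

lemma integrable_tail_abs_X: "integrable M (\<lambda>\<omega>. tail_abs K (X 1 \<omega>))"
  by (rule Bochner_Integration.integrable_bound[OF integrable_abs[OF integrable_X]])
    (auto simp: tail_abs_def)

lemma abs_expectation_truncate_le:
  assumes "K \<le> b"
  shows "\<bar>expectation (\<lambda>\<omega>. truncate b (X s \<omega>))\<bar> \<le> tail_moment M (X 1) K"
proof -
  have "expectation (\<lambda>\<omega>. truncate b (X s \<omega>)) = expectation (\<lambda>\<omega>. truncate b (X 1 \<omega>))"
    by (rule expectation_comp_X) measurable
  also have "\<dots> = - expectation (\<lambda>\<omega>. X 1 \<omega> - truncate b (X 1 \<omega>))"
    using centred_X integrable_X integrable_truncate_X by simp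
  finally have "\<bar>expectation (\<lambda>\<omega>. truncate b (X s \<omega>))\<bar>
      = \<bar>expectation (\<lambda>\<omega>. X 1 \<omega> - truncate b (X 1 \<omega>))\<bar>" by simp
  also have "\<dots> \<le> expectation (\<lambda>\<omega>. \<bar>X 1 \<omega> - truncate b (X 1 \<omega>)\<bar>)"
    by (rule integral_abs_bound)
  also have "\<dots> \<le> expectation (\<lambda>\<omega>. tail_abs K (X 1 \<omega>))"
    using assms integrable_X integrable_truncate_X integrable_tail_abs_X
    by (intro integral_mono) (auto simp: truncate_def tail_abs_def)
  finally show ?thesis by (simp add: tail_moment_eq)
qed

lemma prob_exceed_le_tail_moment:
  assumes "0 \<le> \<gamma>" "K \<le> \<gamma>"
  shows "prob {\<omega>\<in>space M. \<exists>s\<in>{1..n}. \<gamma> + real s < \<bar>X s \<omega>\<bar>} \<le> tail_moment M (X 1) K"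
proof -
  define A where "A s = {\<omega>\<in>space M. \<gamma> + real s < \<bar>X s \<omega>\<bar>}" for s
  have [measurable]: "A s \<in> sets M" for s unfolding A_def by measurable
  have prob_A: "prob (A s) = expectation (\<lambda>\<omega>. if \<gamma> + real s < \<bar>X 1 \<omega>\<bar> then 1 else 0)" for s
  proof -
    have "prob (A s) = expectation (indicator (A s))" by simp
    also have "\<dots> = expectation (\<lambda>\<omega>. (\<lambda>x. if \<gamma> + real s < \<bar>x\<bar> then 1 else 0) (X s \<omega>))"
      by (intro Bochner_Integration.integral_cong) (auto simp: A_def indicator_def)
    also have "\<dots> = expectation (\<lambda>\<omega>. (\<lambda>x. if \<gamma> + real s < \<bar>x\<bar> then 1 else 0) (X 1 \<omega>))"
      by (rule expectation_comp_X) measurable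
    finally show ?thesis by simp
  qed
  have integrable_count: "integrable M (\<lambda>\<omega>. if \<gamma> + real s < \<bar>X 1 \<omega>\<bar> then 1 else 0 :: real)" for s
    by (rule integrable_abs_le[where C=1]) auto
  have "{\<omega>\<in>space M. \<exists>s\<in>{1..n}. \<gamma> + real s < \<bar>X s \<omega>\<bar>} = (\<Union>s\<in>{1..n}. A s)"
    unfolding A_def by auto
  then have "prob {\<omega>\<in>space M. \<exists>s\<in>{1..n}. \<gamma> + real s < \<bar>X s \<omega>\<bar>} \<le> (\<Sum>s=1..n. prob (A s))"
    by (simp add: finite_measure_subadditive_finite image_subset_iff)
  also have "\<dots> = expectation (\<lambda>\<omega>. \<Sum>s=1..n. if \<gamma> + real s < \<bar>X 1 \<omega>\<bar> then 1 else 0)"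
    using integrable_count by (simp add: prob_A Bochner_Integration.integral_sum)
  also have "\<dots> \<le> expectation (\<lambda>\<omega>. tail_abs K (X 1 \<omega>))"
    using integrable_count integrable_tail_abs_X count_exceed_le_tail_abs[OF assms]
    by (intro integral_mono Bochner_Integration.integrable_sum) auto
  finally show ?thesis by (simp add: tail_moment_eq)
qed

definition centred_truncation :: "real \<Rightarrow> nat \<Rightarrow> 'a \<Rightarrow> real" where
  "centred_truncation \<gamma> s \<omega>
    = truncate (\<gamma> + real s) (X s \<omega>) - expectation (\<lambda>\<omega>. truncate (\<gamma> + real s) (X s \<omega>))"

lemma measurable_centred_truncation [measurable]: "centred_truncation \<gamma> s \<in> borel_measurable M"
  unfolding centred_truncation_def by measurable

lemma indep_centred_bounded_truncation:
  assumes "0 \<le> \<gamma>"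
  shows "indep_centred_bounded M (centred_truncation \<gamma>) n (2 * (\<gamma> + real n))"
proof (intro indep_centred_bounded.intro indep_centred_bounded_axioms.intro)
  show "indep_vars (\<lambda>_. borel) (centred_truncation \<gamma>) UNIV"
    unfolding centred_truncation_def
    by (rule indep_vars_compose2[OF indep_X, where Y="\<lambda>s x. truncate (\<gamma> + real s) x
        - expectation (\<lambda>\<omega>. truncate (\<gamma> + real s) (X s \<omega>))", simplified]) measurable
  fix s \<omega> assume s: "s \<in> {1..n}" and \<omega>: "\<omega> \<in> space M"
  have "\<bar>expectation (\<lambda>\<omega>. truncate (\<gamma> + real s) (X s \<omega>))\<bar> \<le> expectation (\<lambda>\<omega>. \<gamma> + real s)"
    using assms integrable_truncate_X
    by (intro order.trans[OF integral_abs_bound] integral_mono abs_truncate_le_level) auto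
  then show "\<bar>centred_truncation \<gamma> s \<omega>\<bar> \<le> 2 * (\<gamma> + real n)"
    using abs_truncate_le_level[of "\<gamma> + real s" "X s \<omega>"] assms s
    unfolding centred_truncation_def by (simp add: prob_space abs_diff_le_iff abs_le_iff)
qed (use assms integrable_truncate_X in
    \<open>auto simp: centred_truncation_def[abs_def] prob_space prob_space_axioms\<close>)

lemma integrable_truncate_X_square: "integrable M (\<lambda>\<omega>. (truncate b (X s \<omega>))\<^sup>2)"
  by (rule integrable_abs_le[where C="(max b 0)\<^sup>2"])
    (auto simp: truncate_def abs_le_square_iff[symmetric])

lemma expectation_centred_truncation_square_le:
  "expectation (\<lambda>\<omega>. (centred_truncation \<gamma> s \<omega>)\<^sup>2)
    \<le> expectation (\<lambda>\<omega>. (truncate (\<gamma> + real s) (X 1 \<omega>))\<^sup>2)"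
proof -
  define T where "T \<omega> = truncate (\<gamma> + real s) (X s \<omega>)" for \<omega>
  have "expectation (\<lambda>\<omega>. (centred_truncation \<gamma> s \<omega>)\<^sup>2) = variance T"
    by (simp add: centred_truncation_def T_def[abs_def])
  also have "\<dots> = expectation (\<lambda>\<omega>. (T \<omega>)\<^sup>2) - (expectation T)\<^sup>2"
    unfolding T_def by (intro variance_eq integrable_truncate_X integrable_truncate_X_square)
  also have "\<dots> \<le> expectation (\<lambda>\<omega>. (T \<omega>)\<^sup>2)"
    by simp
  also have "\<dots> = expectation (\<lambda>\<omega>. (truncate (\<gamma> + real s) (X 1 \<omega>))\<^sup>2)"
    unfolding T_def by (rule expectation_comp_X) measurable
  finally show ?thesis .
qed

lemma prob_centred_truncation_deviation_le:
  assumes \<gamma>: "0 < \<gamma>" and K: "0 \<le> K" and \<epsilon>: "0 < \<epsilon>"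
  shows "\<epsilon>\<^sup>2 * prob {\<omega>\<in>space M. \<exists>t\<in>{1..n}.
            \<epsilon> \<le> \<bar>\<Sum>s=1..t. centred_truncation \<gamma> s \<omega>\<bar> / (\<gamma> + real t)}
      \<le> K\<^sup>2 / \<gamma> + 2 * tail_moment M (X 1) K"
proof -
  interpret T: indep_centred_bounded M "centred_truncation \<gamma>" n "2 * (\<gamma> + real n)"
    using \<gamma> by (intro indep_centred_bounded_truncation) simp
  define c where "c t = 1 / (\<gamma> + real t)" for t :: nat
  have event_eq: "{\<omega>\<in>space M. \<exists>t\<in>{1..n}. \<epsilon> \<le> \<bar>\<Sum>s=1..t. centred_truncation \<gamma> s \<omega>\<bar> / (\<gamma> + real t)}
      = {\<omega>\<in>space M. \<exists>t\<in>{1..n}. \<epsilon> \<le> c t * \<bar>T.partial_sum t \<omega>\<bar>}"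
    by (simp add: c_def T.partial_sum_def)
  then have "\<epsilon>\<^sup>2 * prob {\<omega>\<in>space M. \<exists>t\<in>{1..n}.
            \<epsilon> \<le> \<bar>\<Sum>s=1..t. centred_truncation \<gamma> s \<omega>\<bar> / (\<gamma> + real t)}
      \<le> (\<Sum>t=1..n. (c t)\<^sup>2 * expectation (\<lambda>\<omega>. (centred_truncation \<gamma> t \<omega>)\<^sup>2))"
    unfolding event_eq using \<gamma> \<epsilon>
    by (intro T.Hajek_Renyi_inequality) (auto simp: c_def frac_le)
  also have "\<dots> \<le> (\<Sum>t=1..n. (c t)\<^sup>2 * expectation (\<lambda>\<omega>. (truncate (\<gamma> + real t) (X 1 \<omega>))\<^sup>2))"
    by (intro sum_mono mult_left_mono expectation_centred_truncation_square_le) simp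
  also have "\<dots> = expectation (\<lambda>\<omega>. \<Sum>t=1..n. (c t)\<^sup>2 * (truncate (\<gamma> + real t) (X 1 \<omega>))\<^sup>2)"
    by (simp add: Bochner_Integration.integral_sum integrable_truncate_X_square)
  also have "\<dots> \<le> expectation (\<lambda>\<omega>. K\<^sup>2 / \<gamma> + 2 * tail_abs K (X 1 \<omega>))"
    unfolding c_def using sum_truncated_square_le[OF \<gamma> K] integrable_tail_abs_X
    by (intro integral_mono Bochner_Integration.integrable_sum integrable_mult_right
        integrable_truncate_X_square) auto
  also have "\<dots> = K\<^sup>2 / \<gamma> + 2 * tail_moment M (X 1) K"
    using integrable_tail_abs_X by (simp add: tail_moment_eq prob_space)
  finally show ?thesis .
qed

lemma partial_sums_deviation_subset:
  assumes \<epsilon>: "0 < \<epsilon>" and \<gamma>: "0 \<le> \<gamma>" and K: "K \<le> \<gamma>"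
    and tail: "tail_moment M (X 1) K \<le> \<epsilon>"
  shows "{\<omega>\<in>space M. \<exists>t\<le>n. 2 * \<epsilon> < \<bar>\<Sum>s=1..t. X s \<omega>\<bar> / (\<gamma> + real t)}
      \<subseteq> {\<omega>\<in>space M. \<exists>t\<in>{1..n}. \<epsilon> \<le> \<bar>\<Sum>s=1..t. centred_truncation \<gamma> s \<omega>\<bar> / (\<gamma> + real t)}
        \<union> {\<omega>\<in>space M. \<exists>s\<in>{1..n}. \<gamma> + real s < \<bar>X s \<omega>\<bar>}"
proof (intro subsetI UnCI)
  fix \<omega> assume "\<omega> \<in> {\<omega>\<in>space M. \<exists>t\<le>n. 2 * \<epsilon> < \<bar>\<Sum>s=1..t. X s \<omega>\<bar> / (\<gamma> + real t)}"
  then obtain t where \<omega>: "\<omega> \<in> space M" and t: "t \<le> n"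
    and "2 * \<epsilon> < \<bar>\<Sum>s=1..t. X s \<omega>\<bar> / (\<gamma> + real t)"
    by auto
  moreover from this(3) have "0 < \<gamma> + real t"
    using \<epsilon> \<gamma> by (cases "\<gamma> + real t = 0") auto
  ultimately have deviation: "2 * \<epsilon> * (\<gamma> + real t) < \<bar>\<Sum>s=1..t. X s \<omega>\<bar>"
    by (simp add: pos_less_divide_eq)
  assume "\<omega> \<notin> {\<omega>\<in>space M. \<exists>s\<in>{1..n}. \<gamma> + real s < \<bar>X s \<omega>\<bar>}"
  with \<omega> t have small: "\<bar>X s \<omega>\<bar> \<le> \<gamma> + real s" if "s \<in> {1..t}" for s
    using that by (auto simp: not_less)
  define m where "m s = expectation (\<lambda>\<omega>. truncate (\<gamma> + real s) (X s \<omega>))" for s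
  have "(\<Sum>s=1..t. X s \<omega>) = (\<Sum>s=1..t. centred_truncation \<gamma> s \<omega>) + (\<Sum>s=1..t. m s)"
    using small by (simp add: centred_truncation_def m_def truncate_def flip: sum.distrib)
  moreover have "\<bar>m s\<bar> \<le> \<epsilon>" for s
    using abs_expectation_truncate_le[of K "\<gamma> + real s" s] K \<gamma> tail by (simp add: m_def)
  then have "\<bar>\<Sum>s=1..t. m s\<bar> \<le> real t * \<epsilon>"
    using order.trans[OF sum_abs[of m "{1..t}"] sum_mono[of "{1..t}" "\<lambda>s. \<bar>m s\<bar>" "\<lambda>_. \<epsilon>"]]
    by simp
  ultimately have "\<epsilon> * (\<gamma> + real t) \<le> \<bar>\<Sum>s=1..t. centred_truncation \<gamma> s \<omega>\<bar>"
    using deviation \<epsilon> \<gamma> by (smt (verit) abs_triangle_ineq distrib_left mult.commute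
        mult_nonneg_nonneg of_nat_0_le_iff)
  moreover have "1 \<le> t"
    using deviation \<epsilon> \<gamma> by (cases t) (auto simp: mult_less_0_iff)
  ultimately show "\<omega> \<in> {\<omega>\<in>space M. \<exists>t\<in>{1..n}. \<epsilon> \<le> \<bar>\<Sum>s=1..t. centred_truncation \<gamma> s \<omega>\<bar> / (\<gamma> + real t)}"
    using \<omega> t \<epsilon> \<gamma> by (auto simp: field_simps intro!: bexI[of _ t])
qed

lemma prob_partial_sums_deviation_le:
  assumes \<epsilon>: "0 < \<epsilon>" and \<gamma>: "0 < \<gamma>" and K: "0 \<le> K" "K \<le> \<gamma>"
    and tail: "tail_moment M (X 1) K \<le> \<epsilon>"
  shows "prob {\<omega>\<in>space M. \<exists>t\<le>n. 2 * \<epsilon> < \<bar>\<Sum>s=1..t. X s \<omega>\<bar> / (\<gamma> + real t)}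
      \<le> (K\<^sup>2 / \<gamma> + 2 * tail_moment M (X 1) K) / \<epsilon>\<^sup>2 + tail_moment M (X 1) K"
proof -
  let ?deviate = "{\<omega>\<in>space M. \<exists>t\<in>{1..n}. \<epsilon> \<le> \<bar>\<Sum>s=1..t. centred_truncation \<gamma> s \<omega>\<bar> / (\<gamma> + real t)}"
  let ?exceed = "{\<omega>\<in>space M. \<exists>s\<in>{1..n}. \<gamma> + real s < \<bar>X s \<omega>\<bar>}"
  have "prob {\<omega>\<in>space M. \<exists>t\<le>n. 2 * \<epsilon> < \<bar>\<Sum>s=1..t. X s \<omega>\<bar> / (\<gamma> + real t)}
      \<le> prob (?deviate \<union> ?exceed)"
    using partial_sums_deviation_subset[OF \<epsilon> _ K(2) tail] \<gamma> by (intro finite_measure_mono) auto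
  also have "\<dots> \<le> prob ?deviate + prob ?exceed"
    by (intro measure_Un_le) measurable
  also have "\<dots> \<le> (K\<^sup>2 / \<gamma> + 2 * tail_moment M (X 1) K) / \<epsilon>\<^sup>2 + tail_moment M (X 1) K"
    using prob_centred_truncation_deviation_le[OF \<gamma> K(1) \<epsilon>, of n] prob_exceed_le_tail_moment[of \<gamma> K n] \<epsilon> \<gamma> K
    by (intro add_mono) (auto simp: field_simps)
  finally show ?thesis .
qed

theorem maximal_inequality:
  assumes \<epsilon>: "0 < \<epsilon>" and \<gamma>: "1 \<le> \<gamma>"
    and tail: "tail_moment M (X 1) (\<gamma> powr (1/3)) \<le> \<epsilon>"
  shows "prob {\<omega>\<in>space M. \<exists>t. 2 * \<epsilon> < \<bar>\<Sum>s=1..t. X s \<omega>\<bar> / (\<gamma> + real t)}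
      \<le> 8 / \<epsilon>\<^sup>2 * \<gamma> powr (-1/3) + (16 / \<epsilon>\<^sup>2 + 2) * tail_moment M (X 1) (\<gamma> powr (1/3))"
proof -
  define E where "E n = {\<omega>\<in>space M. \<exists>t\<le>n. 2 * \<epsilon> < \<bar>\<Sum>s=1..t. X s \<omega>\<bar> / (\<gamma> + real t)}" for n
  have [measurable]: "E n \<in> sets M" for n unfolding E_def by measurable
  have "(\<lambda>n. prob (E n)) \<longlonglongrightarrow> prob (\<Union>n. E n)"
    by (intro finite_Lim_measure_incseq) (auto simp: incseq_def E_def intro: order.trans)
  moreover have "(\<Union>n. E n) = {\<omega>\<in>space M. \<exists>t. 2 * \<epsilon> < \<bar>\<Sum>s=1..t. X s \<omega>\<bar> / (\<gamma> + real t)}"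
    unfolding E_def by auto
  moreover have "prob (E n) \<le> (\<gamma> powr (-1/3) + 2 * tail_moment M (X 1) (\<gamma> powr (1/3))) / \<epsilon>\<^sup>2
      + tail_moment M (X 1) (\<gamma> powr (1/3))" for n
    using prob_partial_sums_deviation_le[where n=n and \<gamma>=\<gamma>, OF \<epsilon> _ _ _ tail] powr_one_third[OF \<gamma>] \<gamma>
    unfolding E_def by simp
  ultimately have "prob {\<omega>\<in>space M. \<exists>t. 2 * \<epsilon> < \<bar>\<Sum>s=1..t. X s \<omega>\<bar> / (\<gamma> + real t)}
      \<le> (\<gamma> powr (-1/3) + 2 * tail_moment M (X 1) (\<gamma> powr (1/3))) / \<epsilon>\<^sup>2
        + tail_moment M (X 1) (\<gamma> powr (1/3))"
    by (metis LIMSEQ_le_const2)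
  also have "\<dots> \<le> 8 / \<epsilon>\<^sup>2 * \<gamma> powr (-1/3) + (16 / \<epsilon>\<^sup>2 + 2) * tail_moment M (X 1) (\<gamma> powr (1/3))"
    by (intro maximal_bound_le) (simp_all add: tail_moment_nonneg)
  finally show ?thesis .
qed

theorem average_deviation_inequality:
  assumes \<epsilon>: "0 < \<epsilon>"
  shows "prob {\<omega>\<in>space M. \<epsilon> < \<bar>\<Sum>s=1..k. X s \<omega>\<bar> / real k}
      \<le> 128 / \<epsilon>\<^sup>2 * real k powr (-1/3) + (256 / \<epsilon>\<^sup>2 + 2) * tail_moment M (X 1) (real k powr (1/3))"
proof -
  define r where "r = tail_moment M (X 1) (real k powr (1/3))"
  have bound_nonneg: "0 \<le> 128 / \<epsilon>\<^sup>2 * real k powr (-1/3) + (256 / \<epsilon>\<^sup>2 + 2) * r"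
    unfolding r_def by (simp add: tail_moment_nonneg)
  consider "k = 0" | "k \<noteq> 0" "r \<le> \<epsilon> / 4" | "\<epsilon> / 4 < r" by linarith
  then show ?thesis
  proof cases
    case 1
    then show ?thesis using \<epsilon> bound_nonneg by (simp add: r_def)
  next
    case 2
    have "{\<omega>\<in>space M. \<epsilon> < \<bar>\<Sum>s=1..k. X s \<omega>\<bar> / real k}
        \<subseteq> {\<omega>\<in>space M. \<exists>t. 2 * (\<epsilon> / 4) < \<bar>\<Sum>s=1..t. X s \<omega>\<bar> / (real k + real t)}"
      by (auto simp: field_simps intro!: exI[of _ k])
    then have "prob {\<omega>\<in>space M. \<epsilon> < \<bar>\<Sum>s=1..k. X s \<omega>\<bar> / real k}
        \<le> prob {\<omega>\<in>space M. \<exists>t. 2 * (\<epsilon> / 4) < \<bar>\<Sum>s=1..t. X s \<omega>\<bar> / (real k + real t)}"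
      by (intro finite_measure_mono) measurable
    also have "\<dots> \<le> 8 / (\<epsilon> / 4)\<^sup>2 * real k powr (-1/3) + (16 / (\<epsilon> / 4)\<^sup>2 + 2) * r"
      using 2 \<epsilon> unfolding r_def by (intro maximal_inequality) auto
    also have "\<dots> = 128 / \<epsilon>\<^sup>2 * real k powr (-1/3) + (256 / \<epsilon>\<^sup>2 + 2) * r"
      by (simp add: power_divide)
    finally show ?thesis unfolding r_def .
  next
    case 3
    have "\<epsilon> * 2 \<le> \<epsilon> * \<epsilon> + 128"
      using zero_le_power2[of "\<epsilon> - 1"] by (simp add: power2_eq_square algebra_simps)
    then have "1 \<le> 64 / \<epsilon> + \<epsilon> / 2"
      using \<epsilon> by (simp add: field_simps)
    also have "\<dots> = (256 / \<epsilon>\<^sup>2 + 2) * (\<epsilon> / 4)"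
      using \<epsilon> by (simp add: field_simps power2_eq_square)
    also have "\<dots> \<le> 128 / \<epsilon>\<^sup>2 * real k powr (-1/3) + (256 / \<epsilon>\<^sup>2 + 2) * r"
      using 3 by (intro add_increasing mult_left_mono) auto
    finally show ?thesis using prob_le_1 order.trans unfolding r_def by blast
  qed
qed

end

theorem mainTheorem7:
  fixes M :: "'a measure" and X :: "nat \<Rightarrow> 'a \<Rightarrow> real"
  assumes "prob_space M"
    and "\<And>t. X t \<in> borel_measurable M"
    and "prob_space.indep_vars M (\<lambda>_. borel) X UNIV"
    and "\<And>t. distr M borel (X t) = distr M borel (X 1)"
    and "integrable M (X 1)"
    and "(\<integral>\<omega>. X 1 \<omega> \<partial>M) = 0"
  shows "(\<forall>\<epsilon>>0. \<forall>\<gamma>::real. \<gamma> \<ge> 1 \<longrightarrow> tail_moment M (X 1) (\<gamma> powr (1/3)) \<le> \<epsilon> \<longrightarrow>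
            measure M {\<omega>\<in>space M. \<exists>t::nat. \<bar>\<Sum>s=1..t. X s \<omega>\<bar> / (\<gamma> + real t) > 2 * \<epsilon>}
              \<le> 8 / \<epsilon>\<^sup>2 * \<gamma> powr (-1/3)
                 + (16 / \<epsilon>\<^sup>2 + 2) * tail_moment M (X 1) (\<gamma> powr (1/3)))
       \<and> (\<forall>\<epsilon>>0. \<forall>k::nat. tail_moment M (X 1) (real k powr (1/3)) \<le> \<epsilon> \<longrightarrow>
            measure M {\<omega>\<in>space M. \<bar>\<Sum>s=1..k. X s \<omega>\<bar> / real k > \<epsilon>}
              \<le> 128 / \<epsilon>\<^sup>2 * real k powr (-1/3)
                 + (256 / \<epsilon>\<^sup>2 + 2) * tail_moment M (X 1) (real k powr (1/3)))"
proof -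
  interpret centred_iid M X
    using assms by (intro centred_iid.intro centred_iid_axioms.intro) simp_all
  show ?thesis
    using maximal_inequality average_deviation_inequality by blast
qed

end
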